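(* Let $(P_1,\dots,P_J)$ be a stochastic demand system with vector representation $\pi\in\mathbf{R}^{\sum_j I_j}$, and let $A$ be the rational demand matrix, with $H$ columns. Then $(P_1,\dots,P_J)$ is stochastically rationalizable if and only if $\pi=A\nu$ for some $\nu$ in the unit simplex $\Delta^{H-1}=\{\nu\in\mathbf{R}^H:\nu\ge 0,\ \mathbf{1}_H'\nu=1\}$. Furthermore, this holds if and only if $\pi=A\nu$ for some $\nu\in\mathbf{R}^H$ with $\nu\ge 0$.
   Context: Fix integers $K\ge 1$ and $J\ge1$, price vectors $p_1,\dots,p_J\in\mathbf{R}^K_{++}$, and budget planes $\mathcal{B}_j=\{y\in\mathbf{R}^K_+:p_j'y=1\}$. A point $x$ is on, strictly above, or strictly below $\mathcal{B}_j$ according as $p_j'x=1$, $>1$, $<1$. A demand vector $d=(d_1,\dots,d_J)\in\mathcal{B}_1\times\cdots\times\mathcal{B}_J$ is rationalizable if there is a strictly increasing $u:\mathbf{R}^K_+\to\mathbf{R}$ with $d_j\in\arg\max_{x\in\mathcal{B}_j}u(x)$ for all $j$. A stochastic demand system is $(P_1,\dots,P_J)$ with $P_j$ a probability distribution on $\mathcal{B}_j$; it is stochastically rationalizable if some probability distribution on $\mathcal{B}_1\times\cdots\times\mathcal{B}_J$ concentrated on rationalizable demand vectors has $j$-th marginal $P_j$ for all $j$. Patches: the coarsest partition of $\bigcup_j\mathcal{B}_j$ such that each $\mathcal{B}_j$ is a union of cells and each cell is, for every $j$, entirely on, entirely strictly above, or entirely strictly below $\mathcal{B}_j$ (equivalently,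 cells are the nonempty sets of points with a common sign vector $(\mathrm{sign}(p_j'x-1))_j$). For each patch $x$ fix a representative $y^*(x)\in x$. For each $j$ list the patches contained in $\mathcal{B}_j$ (in an arbitrary fixed order) as $x_{1|j},\dots,x_{I_j|j}$; a patch lying on several budget planes appears in several lists. The vector representation of $(P_1,\dots,P_J)$ is the vector $\pi$ of length $\sum_j I_j$ consisting of $J$ consecutive blocks, the $j$-th block being $(P_j(x_{1|j}),\dots,P_j(x_{I_j|j}))$. The rational demand matrix $A$ is the matrix whose columns are exactly (each once, in some order) the binary vectors $a$ of length $\sum_j I_j$ that have exactly one entry equal to $1$ in each block, say at position $i_j$ in block $j$, and for which the demand vector $(y^*(x_{i_1|1}),\dots,y^*(x_{i_J|J}))$ is rationalizable; $H$ denotes its number of columns. *)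

theory Defs
  imports "HOL-Probability.Probability"
begin

text \<open>Goods are indexed by a finite type 'k (so K = CARD('k) \<ge> 1), budgets by a
finite type 'j (so J = CARD('j) \<ge> 1). Prices: p :: 'j \<Rightarrow> real^'k.\<close>

definition nonneg_orthant :: "(real^'k) set" where
  "nonneg_orthant = {y. \<forall>i. 0 \<le> y $ i}"

definition budget :: "('j \<Rightarrow> real^'k) \<Rightarrow> 'j \<Rightarrow> (real^'k) set" where
  "budget p j = {y \<in> nonneg_orthant. p j \<bullet> y = 1}"

definition strictly_increasing :: "(real^'k \<Rightarrow> real) \<Rightarrow> bool" where
  "strictly_increasing u \<longleftrightarrow>
     (\<forall>x y. x \<in> nonneg_orthant \<and> y \<in> nonneg_orthant \<and> (\<forall>i. x $ i \<le> y $ i) \<and> x \<noteq> y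
        \<longrightarrow> u x < u y)"

definition rationalizable :: "('j \<Rightarrow> real^'k) \<Rightarrow> ('j \<Rightarrow> real^'k) \<Rightarrow> bool" where
  "rationalizable p d \<longleftrightarrow>
     (\<forall>j. d j \<in> budget p j) \<and>
     (\<exists>u. strictly_increasing u \<and> (\<forall>j. \<forall>x\<in>budget p j. u x \<le> u (d j)))"

definition budget_union :: "('j \<Rightarrow> real^'k) \<Rightarrow> (real^'k) set" where
  "budget_union p = (\<Union>j. budget p j)"

definition sign_vector :: "('j \<Rightarrow> real^'k) \<Rightarrow> real^'k \<Rightarrow> 'j \<Rightarrow> real" where
  "sign_vector p x = (\<lambda>j. sgn (p j \<bullet> x - 1))"

definition patches :: "('j \<Rightarrow> real^'k) \<Rightarrow> (real^'k) set set" where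
  "patches p = {{y \<in> budget_union p. sign_vector p y = sign_vector p x} | x. x \<in> budget_union p}"

text \<open>Row index set of the vector representation: pairs (j, x) with x a patch contained
in budget plane j (block j lists the patches in budget j; ordering is immaterial, so
vectors in R^(sum_j I_j) are represented as real functions on this finite index set,
zero outside).\<close>
definition rows :: "('j \<Rightarrow> real^'k) \<Rightarrow> ('j \<times> (real^'k) set) set" where
  "rows p = {(j, x). x \<in> patches p \<and> x \<subseteq> budget p j}"

definition stochastic_demand_system ::
  "('j \<Rightarrow> real^'k) \<Rightarrow> ('j \<Rightarrow> (real^'k) measure) \<Rightarrow> bool" where
  "stochastic_demand_system p P \<longleftrightarrow>
     (\<forall>j. prob_space (P j) \<and> sets (P j) = sets borel \<and> emeasure (P j) (budget p j) = 1)"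

definition stochastically_rationalizable ::
  "('j \<Rightarrow> real^'k) \<Rightarrow> ('j \<Rightarrow> (real^'k) measure) \<Rightarrow> bool" where
  "stochastically_rationalizable p P \<longleftrightarrow>
     (\<exists>Q :: ('j \<Rightarrow> real^'k) measure.
        prob_space Q \<and> sets Q = sets (PiM UNIV (\<lambda>_. borel)) \<and>
        (AE d in Q. rationalizable p d) \<and>
        (\<forall>j. distr Q borel (\<lambda>d. d j) = P j))"

definition vector_rep ::
  "('j \<Rightarrow> real^'k) \<Rightarrow> ('j \<Rightarrow> (real^'k) measure) \<Rightarrow> ('j \<times> (real^'k) set) \<Rightarrow> real" where
  "vector_rep p P = (\<lambda>(j, x). if (j, x) \<in> rows p then measure (P j) x else 0)"

text \<open>Columns of the rational demand matrix: binary vectors (indexed by rows, zero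
outside) with exactly one entry 1 in each block, such that the demand vector of the
representatives of the selected patches is rationalizable.\<close>
definition selected_patch ::
  "('j \<Rightarrow> real^'k) \<Rightarrow> ('j \<times> (real^'k) set \<Rightarrow> real) \<Rightarrow> 'j \<Rightarrow> (real^'k) set" where
  "selected_patch p a j = (THE x. (j, x) \<in> rows p \<and> a (j, x) = 1)"

definition rational_demand_columns ::
  "('j \<Rightarrow> real^'k) \<Rightarrow> ((real^'k) set \<Rightarrow> real^'k) \<Rightarrow> ('j \<times> (real^'k) set \<Rightarrow> real) set" where
  "rational_demand_columns p ystar =
     {a. (\<forall>r. a r \<in> {0, 1}) \<and> (\<forall>r. r \<notin> rows p \<longrightarrow> a r = 0) \<and>
         (\<forall>j. \<exists>!x. (j, x) \<in> rows p \<and> a (j, x) = 1) \<and>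
         rationalizable p (\<lambda>j. ystar (selected_patch p a j))}"

definition mat_vec ::
  "('j \<Rightarrow> real^'k) \<Rightarrow> ((real^'k) set \<Rightarrow> real^'k) \<Rightarrow>
   (('j \<times> (real^'k) set \<Rightarrow> real) \<Rightarrow> real) \<Rightarrow> ('j \<times> (real^'k) set) \<Rightarrow> real" where
  "mat_vec p ystar \<nu> = (\<lambda>r. \<Sum>a\<in>rational_demand_columns p ystar. a r * \<nu> a)"

end

theory Submission
  imports Defs
begin

text \<open>An Afriat-type argument shows that whether a demand vector is rationalizable depends
  only on the sign vectors of its components, i.e. on the patches containing them. Hence the
  rationalizable demand vectors form the disjoint union of the boxes x_1 \<times> ... \<times> x_J of
  patches selected by the columns of A. If Q rationalizes the P_j, the Q-masses of these boxes
  form a \<nu> \<ge> 0 with \<pi> = A \<nu>. Conversely, given such a \<nu>, the mixture with weights \<nu> of the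
  product of the P_j conditioned on the boxes is concentrated on rationalizable demand vectors
  and has marginals P_j. Summing one block of \<pi> = A \<nu> shows that \<nu> automatically lies in
  the unit simplex.\<close>

lemma inner_pos_if_nonneg_nonzero:
  fixes q y :: "real^'k::finite"
  assumes q_pos: "\<And>i. 0 < q $ i" and y_nonneg: "\<And>i. 0 \<le> y $ i" and "y \<noteq> 0"
  shows "0 < q \<bullet> y"
proof -
  obtain i where "y $ i \<noteq> 0" using \<open>y \<noteq> 0\<close> by (auto simp: vec_eq_iff)
  then have "0 < q $ i * y $ i" using q_pos y_nonneg by (simp add: order_le_neq_trans)
  moreover have "0 \<le> q $ k * y $ k" for k using q_pos y_nonneg by (simp add: less_imp_le)
  ultimately have "0 < (\<Sum>k\<in>UNIV. q $ k * y $ k)" by (intro sum_pos2[of UNIV i]) auto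
  then show ?thesis by (simp add: inner_vec_def)
qed

lemma budget_nonneg: "y \<in> budget p j \<Longrightarrow> 0 \<le> y $ i"
  unfolding budget_def nonneg_orthant_def by auto

lemma budget_nonzero: "y \<in> budget p j \<Longrightarrow> y \<noteq> 0"
  unfolding budget_def by auto

lemma strictly_increasing_scaleR:
  assumes "strictly_increasing u" and "x \<in> nonneg_orthant" and "x \<noteq> 0" and "1 < c"
  shows "u x < u (c *\<^sub>R x)"
proof -
  have "x $ i \<le> (c *\<^sub>R x) $ i" for i
    using \<open>x \<in> nonneg_orthant\<close> \<open>1 < c\<close> mult_right_mono[of 1 c "x $ i"]
    by (simp add: nonneg_orthant_def)
  moreover have "x \<noteq> c *\<^sub>R x"
    using \<open>x \<noteq> 0\<close> \<open>1 < c\<close> scaleR_cancel_right[of 1 x c] by auto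
  moreover have "c *\<^sub>R x \<in> nonneg_orthant"
    using \<open>x \<in> nonneg_orthant\<close> \<open>1 < c\<close> by (simp add: nonneg_orthant_def)
  ultimately show ?thesis using assms(1,2) unfolding strictly_increasing_def by blast
qed

lemma rationalizable_imp_utility_levels:
  fixes p :: "'j::finite \<Rightarrow> real^'k::finite"
  assumes prices_pos: "\<And>j i. 0 < p j $ i" and "rationalizable p d"
  obtains U :: "'j \<Rightarrow> real"
    where "\<And>i j. p j \<bullet> d i \<le> 1 \<Longrightarrow> U i \<le> U j"
      and "\<And>i j. p j \<bullet> d i < 1 \<Longrightarrow> U i < U j"
proof -
  from \<open>rationalizable p d\<close> obtain u where d_budget: "\<And>j. d j \<in> budget p j"
    and u_incr: "strictly_increasing u" and u_max: "\<And>j x. x \<in> budget p j \<Longrightarrow> u x \<le> u (d j)"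
    unfolding rationalizable_def by blast
  have levels: "u (d i) \<le> u (d j) \<and> (p j \<bullet> d i < 1 \<longrightarrow> u (d i) < u (d j))"
    if "p j \<bullet> d i \<le> 1" for i j
  proof -
    define t where "t = p j \<bullet> d i"
    have "0 < t"
      unfolding t_def using prices_pos budget_nonneg[OF d_budget] budget_nonzero[OF d_budget]
      by (rule inner_pos_if_nonneg_nonzero)
    have d_orthant: "d i \<in> nonneg_orthant" using d_budget[of i] by (simp add: budget_def)
    have "(1 / t) *\<^sub>R d i \<in> budget p j"
      using \<open>0 < t\<close> d_orthant by (simp add: budget_def nonneg_orthant_def t_def)
    then have scaled_le: "u ((1 / t) *\<^sub>R d i) \<le> u (d j)" by (rule u_max)
    show ?thesis
    proof (cases "t = 1")
      case True
      then show ?thesis using scaled_le t_def by simp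
    next
      case False
      then have "t < 1" using that t_def by simp
      have "u (d i) < u ((1 / t) *\<^sub>R d i)"
        using \<open>0 < t\<close> \<open>t < 1\<close>
        by (intro strictly_increasing_scaleR[OF u_incr d_orthant budget_nonzero[OF d_budget]]) simp
      then show ?thesis using scaled_le by simp
    qed
  qed
  show ?thesis by (rule that[of "\<lambda>j. u (d j)"]) (use levels in auto)
qed

lemma exists_strict_mono_bounded_below:
  fixes \<delta> M :: real
  assumes "0 < \<delta>"
  obtains h :: "real \<Rightarrow> real"
    where "strict_mono h" "h 0 = 0" "\<And>t. - \<delta> < h t" "\<And>t. 0 < t \<Longrightarrow> M < h t"
proof
  define h where "h t = (if 0 < t then \<bar>M\<bar> + t else \<delta> * (exp t - 1))" for t
  have nonpos: "h t \<le> 0" if "\<not> 0 < t" for t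
    using that \<open>0 < \<delta>\<close> by (simp add: h_def mult_nonneg_nonpos)
  show "strict_mono h"
  proof (rule strict_monoI)
    fix s t :: real assume "s < t"
    then show "h s < h t"
      using nonpos[of s] \<open>0 < \<delta>\<close> by (cases "0 < t"; cases "0 < s") (auto simp: h_def)
  qed
  show "h 0 = 0" by (simp add: h_def)
  show "- \<delta> < h t" for t
    using \<open>0 < \<delta>\<close> abs_ge_zero[of M] by (auto simp: h_def algebra_simps)
  show "M < h t" if "0 < t" for t
    using that by (simp add: h_def)
qed

lemma strictly_increasing_slack:
  fixes q :: "real^'k::finite"
  assumes "\<And>i. 0 < q $ i" and "strict_mono h"
  shows "strictly_increasing (\<lambda>x. c + h (q \<bullet> x - 1))"
  unfolding strictly_increasing_def
proof (intro allI impI)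
  fix x y :: "real^'k"
  assume xy: "x \<in> nonneg_orthant \<and> y \<in> nonneg_orthant \<and> (\<forall>i. x $ i \<le> y $ i) \<and> x \<noteq> y"
  have "0 < q \<bullet> (y - x)" by (rule inner_pos_if_nonneg_nonzero) (use assms(1) xy in auto)
  then show "c + h (q \<bullet> x - 1) < c + h (q \<bullet> y - 1)"
    using strict_monoD[OF \<open>strict_mono h\<close>] by (simp add: inner_diff_right)
qed

lemma strictly_increasing_Min:
  fixes f :: "'j::finite \<Rightarrow> real^'k::finite \<Rightarrow> real"
  assumes "\<And>j. strictly_increasing (f j)"
  shows "strictly_increasing (\<lambda>x. Min (range (\<lambda>j. f j x)))"
  unfolding strictly_increasing_def
proof (intro allI impI)
  fix x y :: "real^'k"
  assume "x \<in> nonneg_orthant \<and> y \<in> nonneg_orthant \<and> (\<forall>i. x $ i \<le> y $ i) \<and> x \<noteq> y"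
  then have less: "f j x < f j y" for j using assms unfolding strictly_increasing_def by blast
  have "Min (range (\<lambda>j. f j y)) \<in> range (\<lambda>j. f j y)" by (rule Min_in) auto
  then obtain j where "Min (range (\<lambda>j. f j y)) = f j y" by blast
  moreover have "Min (range (\<lambda>j. f j x)) \<le> f j x" by (rule Min_le) auto
  ultimately show "Min (range (\<lambda>j. f j x)) < Min (range (\<lambda>j. f j y))" using less[of j] by linarith
qed

lemma exists_min_gap:
  fixes U :: "'j::finite \<Rightarrow> real"
  obtains \<delta> where "0 < \<delta>" and "\<And>i j. U i < U j \<Longrightarrow> \<delta> \<le> U j - U i"
proof
  define G where "G = insert 1 ((\<lambda>(i, j). U j - U i) ` {(i, j). U i < U j})"
  show "0 < Min G" by (auto simp: G_def Min_gr_iff)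
  show "Min G \<le> U j - U i" if "U i < U j" for i j
    using that by (intro Min_le) (auto simp: G_def)
qed

lemma utility_levels_imp_rationalizable:
  fixes p :: "'j::finite \<Rightarrow> real^'k::finite" and U :: "'j \<Rightarrow> real"
  assumes prices_pos: "\<And>j i. 0 < p j $ i" and d_budget: "\<And>j. d j \<in> budget p j"
    and weak: "\<And>i j. p j \<bullet> d i \<le> 1 \<Longrightarrow> U i \<le> U j"
    and strict: "\<And>i j. p j \<bullet> d i < 1 \<Longrightarrow> U i < U j"
  shows "rationalizable p d"
proof -
  obtain \<delta> :: real where "0 < \<delta>" and gap: "\<And>i j. U i < U j \<Longrightarrow> \<delta> \<le> U j - U i"
    using exists_min_gap by blast
  define M where "M = Max (range (\<lambda>(i, j). U i - U j))"
  have spread: "U i - U j \<le> M" for i j unfolding M_def by (rule Max_ge) auto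
  obtain h :: "real \<Rightarrow> real" where h_mono: "strict_mono h" and "h 0 = 0"
    and h_above: "\<And>t. - \<delta> < h t" and h_pos: "\<And>t. 0 < t \<Longrightarrow> M < h t"
    using exists_strict_mono_bounded_below[OF \<open>0 < \<delta>\<close>] by blast
  \<comment> \<open>Afriat's utility: the lower envelope of the budget-wise utilities\<close>
  define f where "f j x = U j + h (p j \<bullet> x - 1)" for j x
  define u where "u x = Min (range (\<lambda>j. f j x))" for x
  have "strictly_increasing u"
    unfolding u_def f_def by (intro strictly_increasing_Min strictly_increasing_slack prices_pos h_mono)
  moreover have "u x \<le> U j" if "x \<in> budget p j" for x j
  proof -
    have "u x \<le> f j x" unfolding u_def by (rule Min_le) auto
    then show ?thesis using that \<open>h 0 = 0\<close> by (simp add: f_def budget_def)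
  qed
  moreover have "U j \<le> u (d j)" for j
    unfolding u_def
  proof (rule Min.boundedI)
    fix v assume "v \<in> range (\<lambda>i. f i (d j))"
    then obtain i where v: "v = U i + h (p i \<bullet> d j - 1)" by (auto simp: f_def)
    consider "p i \<bullet> d j > 1" | "p i \<bullet> d j = 1" | "p i \<bullet> d j < 1" by linarith
    then show "U j \<le> v"
    proof cases
      case 1
      then show ?thesis using h_pos[of "p i \<bullet> d j - 1"] spread[of j i] v by simp
    next
      case 2
      then show ?thesis using weak[of i j] \<open>h 0 = 0\<close> v by simp
    next
      case 3
      then show ?thesis using gap[OF strict[of i j]] h_above[of "p i \<bullet> d j - 1"] v by simp
    qed
  qed auto
  ultimately show ?thesis
    unfolding rationalizable_def using d_budget by (meson order_trans)
qed

lemma rationalizable_sign_vector_invariant: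
  fixes p :: "'j::finite \<Rightarrow> real^'k::finite"
  assumes prices_pos: "\<And>j i. 0 < p j $ i" and "rationalizable p d"
    and d'_budget: "\<And>j. d' j \<in> budget p j"
    and same_signs: "\<And>j. sign_vector p (d' j) = sign_vector p (d j)"
  shows "rationalizable p d'"
proof -
  obtain U :: "'j \<Rightarrow> real" where weak: "\<And>i j. p j \<bullet> d i \<le> 1 \<Longrightarrow> U i \<le> U j"
    and strict: "\<And>i j. p j \<bullet> d i < 1 \<Longrightarrow> U i < U j"
    using rationalizable_imp_utility_levels[OF prices_pos \<open>rationalizable p d\<close>] by blast
  have le_iff: "p j \<bullet> d' i \<le> 1 \<longleftrightarrow> p j \<bullet> d i \<le> 1"
    and less_iff: "p j \<bullet> d' i < 1 \<longleftrightarrow> p j \<bullet> d i < 1" for i j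
    using fun_cong[OF same_signs[of i], of j] by (auto simp: sign_vector_def sgn_if split: if_splits)
  show ?thesis
  proof (rule utility_levels_imp_rationalizable[OF prices_pos d'_budget])
    show "U i \<le> U j" if "p j \<bullet> d' i \<le> 1" for i j using that weak by (simp add: le_iff)
    show "U i < U j" if "p j \<bullet> d' i < 1" for i j using that strict by (simp add: less_iff)
  qed
qed

definition patch_of :: "('j \<Rightarrow> real^'k) \<Rightarrow> real^'k \<Rightarrow> (real^'k) set" where
  "patch_of p y = {z \<in> budget_union p. sign_vector p z = sign_vector p y}"

lemma patches_eq_image_patch_of: "patches p = patch_of p ` budget_union p"
  unfolding patches_def patch_of_def by auto

lemma patch_of_self: "y \<in> budget_union p \<Longrightarrow> y \<in> patch_of p y"
  unfolding patch_of_def by auto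

lemma patch_of_in_patches: "y \<in> budget_union p \<Longrightarrow> patch_of p y \<in> patches p"
  unfolding patches_eq_image_patch_of by auto

lemma patch_eq_patch_of: "x \<in> patches p \<Longrightarrow> y \<in> x \<Longrightarrow> x = patch_of p y"
  unfolding patches_eq_image_patch_of patch_of_def by auto

lemma patches_disjoint:
  "x \<in> patches p \<Longrightarrow> x' \<in> patches p \<Longrightarrow> y \<in> x \<Longrightarrow> y \<in> x' \<Longrightarrow> x = x'"
  using patch_eq_patch_of by metis

lemma patch_subset_budget_union: "x \<in> patches p \<Longrightarrow> x \<subseteq> budget_union p"
  unfolding patches_eq_image_patch_of patch_of_def by auto

lemma sign_vector_eq_in_patch:
  "x \<in> patches p \<Longrightarrow> y \<in> x \<Longrightarrow> z \<in> x \<Longrightarrow> sign_vector p z = sign_vector p y"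
  unfolding patches_eq_image_patch_of patch_of_def by auto

lemma mem_budget_union: "y \<in> budget p j \<Longrightarrow> y \<in> budget_union p"
  unfolding budget_union_def by auto

lemma mem_budget_iff_sign_vector:
  "y \<in> budget_union p \<Longrightarrow> y \<in> budget p j \<longleftrightarrow> sign_vector p y j = 0"
  unfolding budget_union_def budget_def sign_vector_def by (auto simp: sgn_eq_0_iff)

lemma patch_subset_budget:
  assumes "x \<in> patches p" and "y \<in> x" and "y \<in> budget p j"
  shows "x \<subseteq> budget p j"
proof
  fix z assume "z \<in> x"
  then have "sign_vector p z = sign_vector p y" and "z \<in> budget_union p" "y \<in> budget_union p"
    using sign_vector_eq_in_patch patch_subset_budget_union assms by blast+
  then show "z \<in> budget p j" using assms(3) by (simp add: mem_budget_iff_sign_vector)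
qed

lemma rows_patch_of:
  assumes "y \<in> budget p j"
  shows "(j, patch_of p y) \<in> rows p"
proof -
  have "y \<in> budget_union p" using assms by (rule mem_budget_union)
  then have "patch_of p y \<in> patches p" by (rule patch_of_in_patches)
  moreover have "patch_of p y \<subseteq> budget p j"
    using \<open>patch_of p y \<in> patches p\<close> patch_of_self[OF \<open>y \<in> budget_union p\<close>] assms
    by (rule patch_subset_budget)
  ultimately show ?thesis by (simp add: rows_def)
qed

lemma budget_eq_Union_rows: "budget p j = (\<Union>x\<in>{x. (j, x) \<in> rows p}. x)"
proof
  show "budget p j \<subseteq> (\<Union>x\<in>{x. (j, x) \<in> rows p}. x)"
  proof
    fix y assume "y \<in> budget p j"
    then have "(j, patch_of p y) \<in> rows p" and "y \<in> patch_of p y"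
      by (simp_all add: rows_patch_of patch_of_self mem_budget_union)
    then show "y \<in> (\<Union>x\<in>{x. (j, x) \<in> rows p}. x)" by blast
  qed
qed (auto simp: rows_def)

lemma finite_patches: "finite (patches (p :: 'j::finite \<Rightarrow> real^'k))"
proof -
  have "sign_vector p y \<in> (UNIV :: 'j set) \<rightarrow>\<^sub>E {-1, 0, 1}" for y
    unfolding sign_vector_def by (auto simp: sgn_if split: if_splits)
  then have "patches p \<subseteq>
      (\<lambda>s. {z \<in> budget_union p. sign_vector p z = s}) ` ((UNIV :: 'j set) \<rightarrow>\<^sub>E {-1, 0, 1})"
    unfolding patches_def by blast
  moreover have "finite ((UNIV :: 'j set) \<rightarrow>\<^sub>E {-1, 0, 1 :: real})" by (rule finite_PiE) auto
  ultimately show ?thesis by (rule finite_subset[OF _ finite_imageI])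
qed

lemma patch_sets_borel:
  fixes p :: "'j::finite \<Rightarrow> real^'k::finite"
  assumes "x \<in> patches p"
  shows "x \<in> sets borel"
proof -
  obtain y where "x = patch_of p y" using assms unfolding patches_eq_image_patch_of by auto
  moreover have "patch_of p y = {z. (\<forall>i. 0 \<le> z $ i) \<and> (\<exists>j. p j \<bullet> z = 1) \<and>
      (\<forall>j. sgn (p j \<bullet> z - 1) = sign_vector p y j)}"
    unfolding patch_of_def budget_union_def budget_def nonneg_orthant_def sign_vector_def
    by (auto simp: fun_eq_iff)
  moreover have "\<dots> \<in> sets borel" by measurable
  ultimately show ?thesis by simp
qed

lemma finite_rows_block: "finite {x. (j, x) \<in> rows (p :: 'j::finite \<Rightarrow> real^'k)}"
  by (rule finite_subset[OF _ finite_patches[of p]]) (auto simp: rows_def)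

lemma column_selected_patch:
  assumes "a \<in> rational_demand_columns p ystar"
  shows "(j, selected_patch p a j) \<in> rows p" and "a (j, selected_patch p a j) = 1"
proof -
  have "\<exists>!x. (j, x) \<in> rows p \<and> a (j, x) = 1"
    using assms unfolding rational_demand_columns_def by blast
  then have "(j, selected_patch p a j) \<in> rows p \<and> a (j, selected_patch p a j) = 1"
    unfolding selected_patch_def by (rule theI')
  then show "(j, selected_patch p a j) \<in> rows p" "a (j, selected_patch p a j) = 1" by simp_all
qed

lemma selected_patch_in_patches:
  "a \<in> rational_demand_columns p ystar \<Longrightarrow> selected_patch p a j \<in> patches p"
  using column_selected_patch(1)[of a p ystar j] by (simp add: rows_def)

lemma selected_patch_subset_budget:
  "a \<in> rational_demand_columns p ystar \<Longrightarrow> selected_patch p a j \<subseteq> budget p j"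
  using column_selected_patch(1)[of a p ystar j] by (simp add: rows_def)

lemma column_apply:
  assumes a: "a \<in> rational_demand_columns p ystar"
  shows "a (j, x) = (if (j, x) \<in> rows p \<and> x = selected_patch p a j then 1 else 0)"
proof -
  have zero_one: "a (j, x) \<in> {0, 1}" and off_rows: "(j, x) \<notin> rows p \<Longrightarrow> a (j, x) = 0"
    and unique: "\<exists>!x. (j, x) \<in> rows p \<and> a (j, x) = 1"
    using a unfolding rational_demand_columns_def by blast+
  consider "(j, x) \<notin> rows p" | "x = selected_patch p a j"
    | "(j, x) \<in> rows p" "x \<noteq> selected_patch p a j" by blast
  then show ?thesis
  proof cases
    case 1
    then show ?thesis using off_rows by simp
  next
    case 2
    then show ?thesis using column_selected_patch[OF a, of j] by simp
  next
    case 3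
    then have "a (j, x) \<noteq> 1" using unique column_selected_patch[OF a, of j] by blast
    then show ?thesis using zero_one 3 by simp
  qed
qed

lemma column_eqI:
  assumes "a \<in> rational_demand_columns p ystar" and "b \<in> rational_demand_columns p ystar"
    and "\<And>j. selected_patch p a j = selected_patch p b j"
  shows "a = b"
proof
  fix r show "a r = b r"
    by (cases r) (simp add: column_apply[OF assms(1)] column_apply[OF assms(2)] assms(3))
qed

lemma finite_rational_demand_columns:
  "finite (rational_demand_columns (p :: 'j::finite \<Rightarrow> real^'k) ystar)"
proof (rule inj_on_finite[of "selected_patch p"])
  show "inj_on (selected_patch p) (rational_demand_columns p ystar)"
    by (rule inj_onI) (metis column_eqI)
  show "selected_patch p ` rational_demand_columns p ystar \<subseteq> (UNIV :: 'j set) \<rightarrow>\<^sub>E patches p"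
    using selected_patch_in_patches by (auto simp: PiE_iff)
  show "finite ((UNIV :: 'j set) \<rightarrow>\<^sub>E patches p)"
    using finite_patches by (intro finite_PiE) simp_all
qed

definition column_box ::
  "('j \<Rightarrow> real^'k) \<Rightarrow> ('j \<times> (real^'k) set \<Rightarrow> real) \<Rightarrow> ('j \<Rightarrow> real^'k) set" where
  "column_box p a = PiE UNIV (selected_patch p a)"

lemma mem_column_box_iff: "d \<in> column_box p a \<longleftrightarrow> (\<forall>j. d j \<in> selected_patch p a j)"
  unfolding column_box_def by (auto simp: PiE_iff)

lemma column_box_sets:
  fixes p :: "'j::finite \<Rightarrow> real^'k::finite"
  assumes "a \<in> rational_demand_columns p ystar"
  shows "column_box p a \<in> sets (PiM UNIV (\<lambda>_. borel))"
  unfolding column_box_def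
  by (rule sets_PiM_I_finite) (auto intro: patch_sets_borel selected_patch_in_patches[OF assms])

definition column_of ::
  "('j \<Rightarrow> real^'k) \<Rightarrow> ('j \<Rightarrow> real^'k) \<Rightarrow> ('j \<times> (real^'k) set \<Rightarrow> real)" where
  "column_of p d = (\<lambda>(j, x). if (j, x) \<in> rows p \<and> x = patch_of p (d j) then 1 else 0)"

lemma selected_patch_column_of:
  assumes "\<And>j. d j \<in> budget p j"
  shows "selected_patch p (column_of p d) j = patch_of p (d j)"
  unfolding selected_patch_def
proof (rule the_equality)
  show "(j, patch_of p (d j)) \<in> rows p \<and> column_of p d (j, patch_of p (d j)) = 1"
    using rows_patch_of[OF assms] by (simp add: column_of_def)
qed (auto simp: column_of_def split: if_splits)

lemma mem_column_box_column_of: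
  assumes "\<And>j. d j \<in> budget p j"
  shows "d \<in> column_box p (column_of p d)"
  using patch_of_self[OF mem_budget_union[OF assms]]
  by (simp add: mem_column_box_iff selected_patch_column_of[OF assms])

lemma mat_vec_apply_row:
  fixes p :: "'j::finite \<Rightarrow> real^'k::finite"
  assumes "(j, x) \<in> rows p"
  shows "mat_vec p ystar \<nu> (j, x) =
    (\<Sum>a\<in>{a \<in> rational_demand_columns p ystar. selected_patch p a j = x}. \<nu> a)"
proof -
  have "mat_vec p ystar \<nu> (j, x) =
      (\<Sum>a\<in>rational_demand_columns p ystar. if selected_patch p a j = x then \<nu> a else 0)"
    unfolding mat_vec_def by (intro sum.cong refl) (simp add: column_apply assms)
  also have "\<dots> = (\<Sum>a\<in>{a \<in> rational_demand_columns p ystar. selected_patch p a j = x}. \<nu> a)"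
    by (rule sum.inter_filter[OF finite_rational_demand_columns, symmetric])
  finally show ?thesis .
qed

lemma vector_rep_eq_mat_vec_iff:
  fixes p :: "'j::finite \<Rightarrow> real^'k::finite"
  shows "vector_rep p P = mat_vec p ystar \<nu> \<longleftrightarrow>
    (\<forall>j x. (j, x) \<in> rows p \<longrightarrow>
      measure (P j) x = (\<Sum>a\<in>{a \<in> rational_demand_columns p ystar. selected_patch p a j = x}. \<nu> a))"
    (is "_ \<longleftrightarrow> (\<forall>j x. _ \<longrightarrow> measure (P j) x = ?mass j x)")
proof
  assume eq: "vector_rep p P = mat_vec p ystar \<nu>"
  show "\<forall>j x. (j, x) \<in> rows p \<longrightarrow> measure (P j) x = ?mass j x"
  proof (intro allI impI)
    fix j x assume "(j, x) \<in> rows p"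
    then show "measure (P j) x = ?mass j x"
      using fun_cong[OF eq, of "(j, x)"] by (simp add: vector_rep_def mat_vec_apply_row)
  qed
next
  assume rows_eq: "\<forall>j x. (j, x) \<in> rows p \<longrightarrow> measure (P j) x = ?mass j x"
  show "vector_rep p P = mat_vec p ystar \<nu>"
  proof (rule ext, clarify)
    fix j x
    show "vector_rep p P (j, x) = mat_vec p ystar \<nu> (j, x)"
    proof (cases "(j, x) \<in> rows p")
      case True
      then show ?thesis using rows_eq by (simp add: vector_rep_def mat_vec_apply_row)
    next
      case False
      then show ?thesis by (simp add: vector_rep_def mat_vec_def column_apply)
    qed
  qed
qed

lemma sum_columns_group_by_patch:
  fixes p :: "'j::finite \<Rightarrow> real^'k::finite"
  shows "(\<Sum>a\<in>rational_demand_columns p ystar. g a) =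
    (\<Sum>x\<in>{x. (j, x) \<in> rows p}. \<Sum>a\<in>{a \<in> rational_demand_columns p ystar. selected_patch p a j = x}. g a)"
proof (rule sum.group[symmetric])
  show "finite {x. (j, x) \<in> rows p}" by (rule finite_rows_block)
  show "(\<lambda>a. selected_patch p a j) ` rational_demand_columns p ystar \<subseteq> {x. (j, x) \<in> rows p}"
    using column_selected_patch(1) by (intro image_subsetI) simp
qed (rule finite_rational_demand_columns)

lemma measure_eq_sum_patches:
  fixes p :: "'j::finite \<Rightarrow> real^'k::finite"
  assumes sds: "stochastic_demand_system p P" and A: "A \<in> sets borel"
  shows "measure (P j) A = (\<Sum>x\<in>{x. (j, x) \<in> rows p}. measure (P j) (x \<inter> A))"
proof -
  let ?X = "{x. (j, x) \<in> rows p}"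
  interpret prob_space "P j" using sds by (simp add: stochastic_demand_system_def)
  have sets_P: "sets (P j) = sets borel" using sds by (simp add: stochastic_demand_system_def)
  have finite_X: "finite ?X" by (rule finite_rows_block)
  have X_sets: "x \<in> sets (P j)" if "x \<in> ?X" for x
    using that patch_sets_borel sets_P by (auto simp: rows_def)
  have "disjoint_family_on (\<lambda>x. x \<inter> A) ?X"
    unfolding disjoint_family_on_def rows_def using patches_disjoint by auto
  then have "(\<Sum>x\<in>?X. measure (P j) (x \<inter> A)) = measure (P j) (\<Union>x\<in>?X. x \<inter> A)"
    using finite_X X_sets A sets_P by (intro finite_measure_finite_Union[symmetric]) auto
  also have "(\<Union>x\<in>?X. x \<inter> A) = budget p j \<inter> A"
    using budget_eq_Union_rows[of p j] by blast
  also have "measure (P j) (budget p j \<inter> A) = measure (P j) A"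
  proof (rule measure_eq_AE)
    have "budget p j \<in> sets (P j)"
      unfolding budget_eq_Union_rows[of p j] using finite_X X_sets by (intro sets.finite_UN) auto
    moreover have "emeasure (P j) (budget p j) = 1" using sds by (simp add: stochastic_demand_system_def)
    ultimately have "AE y in P j. y \<in> budget p j" by (simp add: emeasure_eq_measure AE_prob_1)
    then show "AE y in P j. y \<in> budget p j \<inter> A \<longleftrightarrow> y \<in> A" by eventually_elim auto
    show "budget p j \<inter> A \<in> sets (P j)" "A \<in> sets (P j)"
      using \<open>budget p j \<in> sets (P j)\<close> A sets_P by auto
  qed
  finally show ?thesis by simp
qed

lemma sum_weights_eq_1_if_vector_rep_eq_mat_vec:
  fixes p :: "'j::finite \<Rightarrow> real^'k::finite"
  assumes sds: "stochastic_demand_system p P" and eq: "vector_rep p P = mat_vec p ystar \<nu>"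
  shows "(\<Sum>a\<in>rational_demand_columns p ystar. \<nu> a) = 1"
proof -
  fix j :: 'j
  have rows_eq: "measure (P j) x =
      (\<Sum>a\<in>{a \<in> rational_demand_columns p ystar. selected_patch p a j = x}. \<nu> a)"
    if "(j, x) \<in> rows p" for x
    using eq that by (simp add: vector_rep_eq_mat_vec_iff)
  have "(\<Sum>a\<in>rational_demand_columns p ystar. \<nu> a) = (\<Sum>x\<in>{x. (j, x) \<in> rows p}. measure (P j) x)"
    by (simp add: sum_columns_group_by_patch[where j = j] rows_eq)
  also have "\<dots> = measure (P j) UNIV"
    using measure_eq_sum_patches[OF sds, of UNIV j] by simp
  also have "\<dots> = 1"
    using sds prob_space.prob_space[of "P j"] sets_eq_imp_space_eq[of "P j" borel]
    by (simp add: stochastic_demand_system_def)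
  finally show ?thesis .
qed

lemma measurable_coordinate:
  assumes "sets Q = sets (PiM UNIV (\<lambda>_. borel))"
  shows "(\<lambda>d. d j) \<in> measurable Q borel"
proof -
  have "(\<lambda>d. d j) \<in> measurable (PiM UNIV (\<lambda>_. borel)) borel"
    using measurable_component_singleton[of j UNIV "\<lambda>_. borel"] by simp
  then show ?thesis using measurable_cong_sets[OF assms refl] by blast
qed

lemma weight_le_measure_selected_patch:
  fixes p :: "'j::finite \<Rightarrow> real^'k::finite"
  assumes eq: "vector_rep p P = mat_vec p ystar \<nu>"
    and nonneg: "\<forall>a\<in>rational_demand_columns p ystar. 0 \<le> \<nu> a"
    and a: "a \<in> rational_demand_columns p ystar"
  shows "\<nu> a \<le> measure (P j) (selected_patch p a j)"
proof -
  let ?S = "{b \<in> rational_demand_columns p ystar. selected_patch p b j = selected_patch p a j}"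
  have "\<nu> a \<le> (\<Sum>b\<in>?S. \<nu> b)"
    using a nonneg by (intro member_le_sum) (auto intro: finite_subset[OF _ finite_rational_demand_columns])
  also have "\<dots> = measure (P j) (selected_patch p a j)"
    using eq column_selected_patch(1)[OF a] by (simp add: vector_rep_eq_mat_vec_iff)
  finally show ?thesis .
qed

lemma sum_weighted_conditional_measures:
  fixes p :: "'j::finite \<Rightarrow> real^'k::finite"
  assumes sds: "stochastic_demand_system p P" and eq: "vector_rep p P = mat_vec p ystar \<nu>"
    and A: "A \<in> sets borel"
  shows "(\<Sum>a\<in>rational_demand_columns p ystar.
      \<nu> a * (measure (P j) (selected_patch p a j \<inter> A) / measure (P j) (selected_patch p a j)))
    = measure (P j) A"
proof -
  let ?S = "\<lambda>x. {a \<in> rational_demand_columns p ystar. selected_patch p a j = x}"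
  let ?cond = "\<lambda>x. measure (P j) (x \<inter> A) / measure (P j) x"
  interpret prob_space "P j" using sds by (simp add: stochastic_demand_system_def)
  have "(\<Sum>a\<in>rational_demand_columns p ystar.
      \<nu> a * (measure (P j) (selected_patch p a j \<inter> A) / measure (P j) (selected_patch p a j)))
    = (\<Sum>x\<in>{x. (j, x) \<in> rows p}. \<Sum>a\<in>?S x. \<nu> a * ?cond x)"
    unfolding sum_columns_group_by_patch[where j = j] by (intro sum.cong refl) auto
  also have "\<dots> = (\<Sum>x\<in>{x. (j, x) \<in> rows p}. measure (P j) x * ?cond x)"
  proof (intro sum.cong refl)
    fix x assume "x \<in> {x. (j, x) \<in> rows p}"
    then have mass: "measure (P j) x = sum \<nu> (?S x)" using eq by (simp add: vector_rep_eq_mat_vec_iff)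
    show "(\<Sum>a\<in>?S x. \<nu> a * ?cond x) = measure (P j) x * ?cond x"
      unfolding mass sum_distrib_right ..
  qed
  also have "\<dots> = (\<Sum>x\<in>{x. (j, x) \<in> rows p}. measure (P j) (x \<inter> A))"
  proof (intro sum.cong refl)
    fix x assume "x \<in> {x. (j, x) \<in> rows p}"
    then have "x \<in> sets (P j)"
      using sds patch_sets_borel by (auto simp: rows_def stochastic_demand_system_def)
    then have "measure (P j) (x \<inter> A) \<le> measure (P j) x" by (intro finite_measure_mono) auto
    \<comment> \<open>a null patch contributes 0 on both sides, since division by 0 yields 0\<close>
    then show "measure (P j) x * ?cond x = measure (P j) (x \<inter> A)"
      using measure_nonneg[of "P j" "x \<inter> A"] by (cases "measure (P j) x = 0") auto
  qed
  also have "\<dots> = measure (P j) A" using measure_eq_sum_patches[OF sds A] by simp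
  finally show ?thesis .
qed

definition column_weight ::
  "('j::finite \<Rightarrow> (real^'k) measure) \<Rightarrow> ('j \<Rightarrow> real^'k) \<Rightarrow>
   (('j \<times> (real^'k) set \<Rightarrow> real) \<Rightarrow> real) \<Rightarrow> ('j \<times> (real^'k) set \<Rightarrow> real) \<Rightarrow> real" where
  "column_weight P p \<nu> a = \<nu> a / (\<Prod>j\<in>UNIV. measure (P j) (selected_patch p a j))"

text \<open>The mixture over columns a, with weights \<nu> a, of the product measures of the P j
  conditioned on the patches selected by a.\<close>
definition column_mixture ::
  "('j::finite \<Rightarrow> (real^'k) measure) \<Rightarrow> ('j \<Rightarrow> real^'k) \<Rightarrow> ((real^'k) set \<Rightarrow> real^'k) \<Rightarrow>
   (('j \<times> (real^'k) set \<Rightarrow> real) \<Rightarrow> real) \<Rightarrow> ('j \<Rightarrow> real^'k) measure" where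
  "column_mixture P p ystar \<nu> = density (PiM UNIV P) (\<lambda>d.
     \<Sum>a\<in>rational_demand_columns p ystar. ennreal (column_weight P p \<nu> a) * indicator (column_box p a) d)"

lemma column_weight_mult_prod_slice:
  fixes p :: "'j::finite \<Rightarrow> real^'k::finite"
  assumes eq: "vector_rep p P = mat_vec p ystar \<nu>"
    and nonneg: "\<forall>a\<in>rational_demand_columns p ystar. 0 \<le> \<nu> a"
    and a: "a \<in> rational_demand_columns p ystar"
  shows "column_weight P p \<nu> a *
      (\<Prod>k\<in>UNIV. measure (P k) (if k = j then selected_patch p a j \<inter> A else selected_patch p a k))
    = \<nu> a * (measure (P j) (selected_patch p a j \<inter> A) / measure (P j) (selected_patch p a j))"
proof (cases "\<nu> a = 0")
  case True
  then show ?thesis by (simp add: column_weight_def)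
next
  case False
  define R where "R = (\<Prod>k\<in>UNIV - {j}. measure (P k) (selected_patch p a k))"
  \<comment> \<open>a column of positive weight selects only patches of positive mass, so nothing is divided by 0\<close>
  have "0 < \<nu> a" using False nonneg a by force
  then have selected_pos: "0 < measure (P k) (selected_patch p a k)" for k
    using weight_le_measure_selected_patch[OF eq nonneg a, of k] by simp
  then have "0 < R" unfolding R_def by (intro prod_pos) auto
  have "(\<Prod>k\<in>UNIV. measure (P k) (if k = j then selected_patch p a j \<inter> A else selected_patch p a k))
      = measure (P j) (selected_patch p a j \<inter> A) * R"
    unfolding R_def by (subst prod.remove[of UNIV j]) (auto intro!: prod.cong)
  moreover have "(\<Prod>k\<in>UNIV. measure (P k) (selected_patch p a k)) = measure (P j) (selected_patch p a j) * R"
    unfolding R_def by (subst prod.remove[of UNIV j]) auto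
  ultimately show ?thesis
    using \<open>0 < R\<close> selected_pos[of j] by (simp add: column_weight_def field_simps)
qed

lemma emeasure_PiM_column_box_slice:
  fixes p :: "'j::finite \<Rightarrow> real^'k::finite"
  assumes sds: "stochastic_demand_system p P"
    and a: "a \<in> rational_demand_columns p ystar" and A: "A \<in> sets borel"
  shows "emeasure (PiM UNIV P) (column_box p a \<inter> {d. d j \<in> A}) =
    ennreal (\<Prod>k\<in>UNIV. measure (P k) (if k = j then selected_patch p a j \<inter> A else selected_patch p a k))"
proof -
  define B where "B k = (if k = j then selected_patch p a j \<inter> A else selected_patch p a k)" for k
  have prob: "prob_space (P k)" and sets_P: "sets (P k) = sets borel" for k
    using sds by (simp_all add: stochastic_demand_system_def)
  have B_sets: "B k \<in> sets (P k)" for k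
    using patch_sets_borel[OF selected_patch_in_patches[OF a]] A sets_P by (auto simp: B_def)
  have "(\<forall>k. d k \<in> B k) \<longleftrightarrow> (\<forall>k. d k \<in> selected_patch p a k) \<and> d j \<in> A" for d
    unfolding B_def by (metis (full_types) IntD1 IntD2 IntI)
  then have "column_box p a \<inter> {d. d j \<in> A} = PiE UNIV B"
    unfolding set_eq_iff by (simp add: mem_column_box_iff PiE_iff)
  moreover have "product_sigma_finite P"
    using prob by (simp add: product_sigma_finite_def prob_space_imp_sigma_finite)
  then have "emeasure (PiM UNIV P) (PiE UNIV B) = (\<Prod>k\<in>UNIV. emeasure (P k) (B k))"
    using B_sets by (intro product_sigma_finite.emeasure_PiM) auto
  moreover have "\<dots> = ennreal (\<Prod>k\<in>UNIV. measure (P k) (B k))"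
    using prob by (simp add: prob_space_def finite_measure.emeasure_eq_measure prod_ennreal)
  ultimately show ?thesis by (simp add: B_def)
qed

lemma sets_PiM_demand_system:
  assumes "stochastic_demand_system p P"
  shows "sets (PiM UNIV P) = sets (PiM UNIV (\<lambda>_. borel))"
  using assms by (intro sets_PiM_cong) (simp_all add: stochastic_demand_system_def)

lemma borel_measurable_column_mixture_density:
  fixes p :: "'j::finite \<Rightarrow> real^'k::finite"
  assumes "stochastic_demand_system p P"
  shows "(\<lambda>d. \<Sum>a\<in>rational_demand_columns p ystar.
      ennreal (column_weight P p \<nu> a) * indicator (column_box p a) d) \<in> borel_measurable (PiM UNIV P)"
proof (rule borel_measurable_sum)
  fix a assume "a \<in> rational_demand_columns p ystar"
  then have "column_box p a \<in> sets (PiM UNIV P)"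
    using column_box_sets sets_PiM_demand_system[OF assms] by blast
  then show "(\<lambda>d. ennreal (column_weight P p \<nu> a) * indicator (column_box p a) d) \<in> borel_measurable (PiM UNIV P)"
    by measurable
qed

lemma emeasure_column_mixture_coordinate:
  fixes p :: "'j::finite \<Rightarrow> real^'k::finite"
  assumes sds: "stochastic_demand_system p P" and eq: "vector_rep p P = mat_vec p ystar \<nu>"
    and nonneg: "\<forall>a\<in>rational_demand_columns p ystar. 0 \<le> \<nu> a" and A: "A \<in> sets borel"
  shows "emeasure (column_mixture P p ystar \<nu>) {d. d j \<in> A} = ennreal (measure (P j) A)"
proof -
  let ?C = "rational_demand_columns p ystar"
  let ?M = "PiM UNIV P"
  let ?w = "column_weight P p \<nu>"
  let ?slice = "\<lambda>a. column_box p a \<inter> {d. d j \<in> A}"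
  have sets_M: "sets ?M = sets (PiM UNIV (\<lambda>_. borel))" using sds by (rule sets_PiM_demand_system)
  have "{d. d j \<in> A} \<in> sets ?M"
    using measurable_sets[OF measurable_coordinate[OF sets_M] A] sets_eq_imp_space_eq[OF sets_M]
    by (simp add: vimage_def space_PiM)
  then have slice_sets: "?slice a \<in> sets ?M" if "a \<in> ?C" for a
    using column_box_sets[OF that] sets_M by auto
  have weight_nonneg: "0 \<le> ?w a" if "a \<in> ?C" for a
    using nonneg that by (simp add: column_weight_def prod_nonneg)
  have "emeasure (column_mixture P p ystar \<nu>) {d. d j \<in> A} =
      (\<integral>\<^sup>+ d. (\<Sum>a\<in>?C. ennreal (?w a) * indicator (?slice a) d) \<partial>?M)"
    unfolding column_mixture_def
    using borel_measurable_column_mixture_density[OF sds] \<open>{d. d j \<in> A} \<in> sets ?M\<close>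
    by (simp add: emeasure_density sum_distrib_right indicator_inter_arith mult.assoc)
  also have "\<dots> = (\<Sum>a\<in>?C. ennreal (?w a) * emeasure ?M (?slice a))"
    using slice_sets by (simp add: nn_integral_sum nn_integral_cmult_indicator)
  also have "\<dots> = (\<Sum>a\<in>?C. ennreal (\<nu> a *
      (measure (P j) (selected_patch p a j \<inter> A) / measure (P j) (selected_patch p a j))))"
    using weight_nonneg
    by (intro sum.cong refl)
       (simp add: emeasure_PiM_column_box_slice[OF sds _ A] column_weight_mult_prod_slice[OF eq nonneg]
         ennreal_mult'[symmetric] prod_nonneg)
  also have "\<dots> = ennreal (\<Sum>a\<in>?C. \<nu> a *
      (measure (P j) (selected_patch p a j \<inter> A) / measure (P j) (selected_patch p a j)))"
    using nonneg by (intro sum_ennreal) simp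
  also have "\<dots> = ennreal (measure (P j) A)"
    by (simp only: sum_weighted_conditional_measures[OF sds eq A])
  finally show ?thesis .
qed

lemma sets_column_mixture:
  assumes "stochastic_demand_system p P"
  shows "sets (column_mixture P p ystar \<nu>) = sets (PiM UNIV (\<lambda>_. borel))"
  unfolding column_mixture_def using sets_PiM_demand_system[OF assms] by simp

lemma column_mixture_marginals:
  fixes p :: "'j::finite \<Rightarrow> real^'k::finite"
  assumes sds: "stochastic_demand_system p P" and eq: "vector_rep p P = mat_vec p ystar \<nu>"
    and nonneg: "\<forall>a\<in>rational_demand_columns p ystar. 0 \<le> \<nu> a"
  shows "prob_space (column_mixture P p ystar \<nu>)"
    and "distr (column_mixture P p ystar \<nu>) borel (\<lambda>d. d j) = P j"
proof -
  let ?Q = "column_mixture P p ystar \<nu>"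
  have sets_Q: "sets ?Q = sets (PiM UNIV (\<lambda>_. borel))" using sds by (rule sets_column_mixture)
  have space_Q: "space ?Q = UNIV"
    using sets_eq_imp_space_eq[OF sets_Q] by (simp add: space_PiM)
  have prob_P: "prob_space (P j)" and sets_P: "sets (P j) = sets borel" for j
    using sds by (simp_all add: stochastic_demand_system_def)
  have marginal: "emeasure ?Q {d. d j \<in> A} = emeasure (P j) A" if "A \<in> sets borel" for j A
    using emeasure_column_mixture_coordinate[OF sds eq nonneg that] prob_P[of j]
    by (simp add: prob_space_def finite_measure.emeasure_eq_measure)
  show "prob_space ?Q"
  proof
    have "emeasure ?Q (space ?Q) = emeasure (P j) UNIV" using marginal[of UNIV j] space_Q by simp
    also have "\<dots> = 1"
      using prob_space.emeasure_space_1[OF prob_P] sets_eq_imp_space_eq[OF sets_P] by simp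
    finally show "emeasure ?Q (space ?Q) = 1" .
  qed
  show "distr ?Q borel (\<lambda>d. d j) = P j"
  proof (rule measure_eqI)
    show "sets (distr ?Q borel (\<lambda>d. d j)) = sets (P j)" using sets_P by simp
    fix A assume "A \<in> sets (distr ?Q borel (\<lambda>d. d j))"
    then have "A \<in> sets borel" by simp
    then show "emeasure (distr ?Q borel (\<lambda>d. d j)) A = emeasure (P j) A"
      using emeasure_distr[OF measurable_coordinate[OF sets_Q]] marginal space_Q
      by (simp add: vimage_def)
  qed
qed

context
  fixes p :: "'j::finite \<Rightarrow> real^'k::finite" and ystar :: "(real^'k) set \<Rightarrow> real^'k"
  assumes prices_pos: "\<And>j i. 0 < p j $ i"
    and reps: "\<And>x. x \<in> patches p \<Longrightarrow> ystar x \<in> x"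
begin

lemma rationalizable_if_mem_column_box:
  assumes a: "a \<in> rational_demand_columns p ystar" and "d \<in> column_box p a"
  shows "rationalizable p d"
proof (rule rationalizable_sign_vector_invariant[OF prices_pos])
  show "rationalizable p (\<lambda>j. ystar (selected_patch p a j))"
    using a unfolding rational_demand_columns_def by blast
  fix j
  have "d j \<in> selected_patch p a j" using \<open>d \<in> column_box p a\<close> by (simp add: mem_column_box_iff)
  then show "d j \<in> budget p j" using selected_patch_subset_budget[OF a] by blast
  have patch: "selected_patch p a j \<in> patches p" using a by (rule selected_patch_in_patches)
  show "sign_vector p (d j) = sign_vector p (ystar (selected_patch p a j))"
    using patch reps[OF patch] \<open>d j \<in> selected_patch p a j\<close> by (rule sign_vector_eq_in_patch)
qed

lemma column_of_mem_columns:
  assumes "rationalizable p d"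
  shows "column_of p d \<in> rational_demand_columns p ystar"
proof -
  have d_budget: "\<And>j. d j \<in> budget p j" using assms unfolding rationalizable_def by blast
  have unique: "\<exists>!x. (j, x) \<in> rows p \<and> column_of p d (j, x) = 1" for j
  proof (rule ex1I)
    show "(j, patch_of p (d j)) \<in> rows p \<and> column_of p d (j, patch_of p (d j)) = 1"
      using rows_patch_of[OF d_budget] by (simp add: column_of_def)
    show "x = patch_of p (d j)" if "(j, x) \<in> rows p \<and> column_of p d (j, x) = 1" for x
    proof (rule ccontr)
      assume "x \<noteq> patch_of p (d j)"
      then have "column_of p d (j, x) = 0" by (simp add: column_of_def)
      with that show False by simp
    qed
  qed
  have reps_rationalizable: "rationalizable p (\<lambda>j. ystar (patch_of p (d j)))"
  proof (rule rationalizable_sign_vector_invariant[OF prices_pos assms])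
    fix j
    have in_union: "d j \<in> budget_union p" using d_budget by (rule mem_budget_union)
    then have patch: "patch_of p (d j) \<in> patches p" by (rule patch_of_in_patches)
    then have rep: "ystar (patch_of p (d j)) \<in> patch_of p (d j)" by (rule reps)
    have "patch_of p (d j) \<subseteq> budget p j"
      using patch patch_of_self[OF in_union] d_budget by (rule patch_subset_budget)
    then show "ystar (patch_of p (d j)) \<in> budget p j" using rep by blast
    show "sign_vector p (ystar (patch_of p (d j))) = sign_vector p (d j)"
      using rep by (simp add: patch_of_def)
  qed
  have "column_of p d r \<in> {0, 1}" and "r \<notin> rows p \<Longrightarrow> column_of p d r = 0" for r
    by (cases r; simp add: column_of_def)+
  then show ?thesis
    using unique reps_rationalizable
    by (simp add: rational_demand_columns_def selected_patch_column_of[OF d_budget])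
qed

lemma column_box_unique:
  assumes a: "a \<in> rational_demand_columns p ystar" and d: "d \<in> column_box p a"
  shows "a = column_of p d"
proof -
  have "rationalizable p d" using a d by (rule rationalizable_if_mem_column_box)
  then have d_budget: "\<And>j. d j \<in> budget p j" unfolding rationalizable_def by blast
  show ?thesis
  proof (rule column_eqI[OF a column_of_mem_columns[OF \<open>rationalizable p d\<close>]])
    fix j
    have "d j \<in> selected_patch p a j" using d by (simp add: mem_column_box_iff)
    then show "selected_patch p a j = selected_patch p (column_of p d) j"
      using patch_eq_patch_of[OF selected_patch_in_patches[OF a]]
      by (simp add: selected_patch_column_of[OF d_budget])
  qed
qed

lemma disjoint_family_column_box:
  "disjoint_family_on (column_box p) (rational_demand_columns p ystar)"
  unfolding disjoint_family_on_def
proof (intro ballI impI)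
  fix a b assume "a \<in> rational_demand_columns p ystar" "b \<in> rational_demand_columns p ystar" "a \<noteq> b"
  then show "column_box p a \<inter> column_box p b = {}" using column_box_unique by blast
qed

lemma rationalizable_in_patch_eq_Union_column_boxes:
  assumes "(j, x) \<in> rows p"
  shows "{d. rationalizable p d \<and> d j \<in> x} =
    (\<Union>a\<in>{a \<in> rational_demand_columns p ystar. selected_patch p a j = x}. column_box p a)"
proof (intro equalityI subsetI)
  fix d assume "d \<in> {d. rationalizable p d \<and> d j \<in> x}"
  then have "rationalizable p d" and "d j \<in> x" by simp_all
  then have d_budget: "\<And>j. d j \<in> budget p j" unfolding rationalizable_def by blast
  have "x = patch_of p (d j)"
    using assms \<open>d j \<in> x\<close> patch_eq_patch_of by (auto simp: rows_def)
  then have "selected_patch p (column_of p d) j = x" by (simp add: selected_patch_column_of[OF d_budget])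
  then show "d \<in> (\<Union>a\<in>{a \<in> rational_demand_columns p ystar. selected_patch p a j = x}. column_box p a)"
    using column_of_mem_columns[OF \<open>rationalizable p d\<close>] mem_column_box_column_of[OF d_budget] by blast
next
  fix d assume "d \<in> (\<Union>a\<in>{a \<in> rational_demand_columns p ystar. selected_patch p a j = x}. column_box p a)"
  then show "d \<in> {d. rationalizable p d \<and> d j \<in> x}"
    using rationalizable_if_mem_column_box by (auto simp: mem_column_box_iff)
qed

lemma stochastically_rationalizable_imp_vector_rep_eq_mat_vec:
  assumes "stochastically_rationalizable p P"
  obtains \<nu> where "\<forall>a\<in>rational_demand_columns p ystar. 0 \<le> \<nu> a"
    and "vector_rep p P = mat_vec p ystar \<nu>"
proof -
  obtain Q where "prob_space Q" and sets_Q: "sets Q = sets (PiM UNIV (\<lambda>_. borel))"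
    and ae: "AE d in Q. rationalizable p d" and marginals: "\<And>j. distr Q borel (\<lambda>d. d j) = P j"
    using assms unfolding stochastically_rationalizable_def by blast
  interpret Q: prob_space Q by fact
  have space_Q: "space Q = UNIV"
    using sets_eq_imp_space_eq[OF sets_Q] by (simp add: space_PiM)
  have box_sets: "column_box p a \<in> sets Q" if "a \<in> rational_demand_columns p ystar" for a
    using column_box_sets[OF that] sets_Q by simp
  define \<nu> where "\<nu> a = measure Q (column_box p a)" for a
  have "measure (P j) x = (\<Sum>a\<in>{a \<in> rational_demand_columns p ystar. selected_patch p a j = x}. \<nu> a)"
    if row: "(j, x) \<in> rows p" for j x
  proof -
    let ?S = "{a \<in> rational_demand_columns p ystar. selected_patch p a j = x}"
    have "x \<in> sets borel" using row patch_sets_borel by (auto simp: rows_def)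
    have coordinate: "(\<lambda>d. d j) \<in> measurable Q borel" using sets_Q by (rule measurable_coordinate)
    have finite_S: "finite ?S" by (rule finite_subset[OF _ finite_rational_demand_columns]) auto
    have "measure (P j) x = measure Q {d. d j \<in> x}"
      using measure_distr[OF coordinate \<open>x \<in> sets borel\<close>] marginals[of j] space_Q
      by (simp add: vimage_def)
    also have "\<dots> = measure Q {d. rationalizable p d \<and> d j \<in> x}"
    proof (rule measure_eq_AE)
      show "AE d in Q. d \<in> {d. d j \<in> x} \<longleftrightarrow> d \<in> {d. rationalizable p d \<and> d j \<in> x}"
        using ae by auto
      show "{d. d j \<in> x} \<in> sets Q"
        using measurable_sets[OF coordinate \<open>x \<in> sets borel\<close>] space_Q by (simp add: vimage_def)
      show "{d. rationalizable p d \<and> d j \<in> x} \<in> sets Q"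
        unfolding rationalizable_in_patch_eq_Union_column_boxes[OF row]
        using finite_S box_sets by (intro sets.finite_UN) auto
    qed
    also have "\<dots> = (\<Sum>a\<in>?S. \<nu> a)"
      unfolding rationalizable_in_patch_eq_Union_column_boxes[OF row] \<nu>_def
      using finite_S box_sets disjoint_family_on_mono[OF _ disjoint_family_column_box, of ?S]
      by (intro Q.finite_measure_finite_Union) auto
    finally show ?thesis .
  qed
  then show ?thesis using that[of \<nu>] by (simp add: \<nu>_def vector_rep_eq_mat_vec_iff)
qed

lemma vector_rep_eq_mat_vec_imp_stochastically_rationalizable:
  assumes sds: "stochastic_demand_system p P" and eq: "vector_rep p P = mat_vec p ystar \<nu>"
    and nonneg: "\<forall>a\<in>rational_demand_columns p ystar. 0 \<le> \<nu> a"
  shows "stochastically_rationalizable p P"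
proof -
  let ?Q = "column_mixture P p ystar \<nu>"
  have "AE d in ?Q. rationalizable p d"
    unfolding column_mixture_def AE_density[OF borel_measurable_column_mixture_density[OF sds]]
  proof (rule AE_I2, rule impI)
    fix d
    assume "0 < (\<Sum>a\<in>rational_demand_columns p ystar.
      ennreal (column_weight P p \<nu> a) * indicator (column_box p a) d)"
    then obtain a where "a \<in> rational_demand_columns p ystar"
      and "ennreal (column_weight P p \<nu> a) * indicator (column_box p a) d \<noteq> 0"
      by (metis (no_types, lifting) less_irrefl sum.neutral)
    then show "rationalizable p d"
      by (auto intro: rationalizable_if_mem_column_box simp: indicator_def split: if_splits)
  qed
  then show ?thesis
    unfolding stochastically_rationalizable_def
    using column_mixture_marginals[OF sds eq nonneg] sets_column_mixture[OF sds] by blast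
qed

end

theorem proposition2:
  fixes p :: "'j::finite \<Rightarrow> real^'k::finite"
    and P :: "'j \<Rightarrow> (real^'k) measure"
    and ystar :: "(real^'k) set \<Rightarrow> real^'k"
  assumes prices_pos: "\<And>j i. p j $ i > 0"
    and sds: "stochastic_demand_system p P"
    and reps: "\<And>x. x \<in> patches p \<Longrightarrow> ystar x \<in> x"
  shows "(stochastically_rationalizable p P \<longleftrightarrow>
            (\<exists>\<nu>. (\<forall>a\<in>rational_demand_columns p ystar. \<nu> a \<ge> 0) \<and>
                 (\<Sum>a\<in>rational_demand_columns p ystar. \<nu> a) = 1 \<and>
                 vector_rep p P = mat_vec p ystar \<nu>))
       \<and> (stochastically_rationalizable p P \<longleftrightarrow>
            (\<exists>\<nu>. (\<forall>a\<in>rational_demand_columns p ystar. \<nu> a \<ge> 0) \<and>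
                 vector_rep p P = mat_vec p ystar \<nu>))"
proof -
  have necessary: "\<exists>\<nu>. (\<forall>a\<in>rational_demand_columns p ystar. \<nu> a \<ge> 0) \<and>
      vector_rep p P = mat_vec p ystar \<nu>" if "stochastically_rationalizable p P"
    using stochastically_rationalizable_imp_vector_rep_eq_mat_vec[OF prices_pos reps that] by metis
  have sufficient: "stochastically_rationalizable p P"
    if "\<forall>a\<in>rational_demand_columns p ystar. \<nu> a \<ge> 0" and "vector_rep p P = mat_vec p ystar \<nu>" for \<nu>
    using vector_rep_eq_mat_vec_imp_stochastically_rationalizable[OF prices_pos reps sds] that by blast
  have "(\<Sum>a\<in>rational_demand_columns p ystar. \<nu> a) = 1"
    if "vector_rep p P = mat_vec p ystar \<nu>" for \<nu>
    using sds that by (rule sum_weights_eq_1_if_vector_rep_eq_mat_vec)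
  then show ?thesis using necessary sufficient by blast
qed

end
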